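(* Let $\Omega$ be the set of nonempty subsets of $\{1,\dots,N\}$, $N\ge2$. The chain $Q$ restricted to $\Omega$ is a reversible ergodic Markov chain with stationary distribution $\mathcal{M}(S)=3^{|S|}/(4^N-1)$, $S\in\Omega$, and its spectral gap satisfies $$\lambda_Q\ \ge\ \frac{4}{9N(N-1)}.$$
   Context: The chain $Q$ on subsets $S\subseteq\{1,\dots,N\}$: from $S$, choose an ordered pair $(c,t)$ of distinct indices uniformly at random (probability $1/(N(N-1))$ each); let $(s_c,s_t)\in\{0,1\}^2$ record whether $c\in S$, $t\in S$; replace this membership pattern by a new one according to: $(0,0)\to(0,0)$ with probability 1; $(1,0)\to(1,1)$ w.p. $2/3$, $\to(1,0)$ w.p. $1/3$; $(0,1)\to(1,1)$ w.p. $2/3$, $\to(0,1)$ w.p. $1/3$; $(1,1)\to(1,1)$ w.p. $5/9$, $\to(1,0)$ w.p. $2/9$, $\to(0,1)$ w.p. $2/9$; membership of other indices unchanged. The empty set is an absorbing isolated state, so $Q$ restricts to $\Omega$. The spectral gap $\lambda_Q$ is $1$ minus the second largest eigenvalue of the transition matrix of $Q$ on $\Omega$. *)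

theory Defs
  imports Complex_Main
begin

definition Omega :: "nat \<Rightarrow> nat set set" where
  "Omega N = {S. S \<subseteq> {1..N} \<and> S \<noteq> {}}"

text \<open>Local update rule on the membership pattern (s_c, s_t) of the ordered pair (c,t).\<close>
definition pat_prob :: "bool \<times> bool \<Rightarrow> bool \<times> bool \<Rightarrow> real" where
  "pat_prob old new =
     (case old of
        (False, False) \<Rightarrow> (if new = (False, False) then 1 else 0)
      | (True, False) \<Rightarrow> (if new = (True, True) then 2/3 else if new = (True, False) then 1/3 else 0)
      | (False, True) \<Rightarrow> (if new = (True, True) then 2/3 else if new = (False, True) then 1/3 else 0)
      | (True, True) \<Rightarrow> (if new = (True, True) then 5/9 else if new = (True, False) then 2/9
                          else if new = (False, True) then 2/9 else 0))"

definition Qtrans :: "nat \<Rightarrow> nat set \<Rightarrow> nat set \<Rightarrow> real" where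
  "Qtrans N S T =
     (\<Sum>c\<in>{1..N}. \<Sum>t\<in>{1..N} - {c}.
        (if (\<forall>i. i \<notin> {c, t} \<longrightarrow> (i \<in> S \<longleftrightarrow> i \<in> T))
         then pat_prob (c \<in> S, t \<in> S) (c \<in> T, t \<in> T) / (real N * (real N - 1))
         else 0))"

fun Qpow :: "nat \<Rightarrow> nat \<Rightarrow> nat set \<Rightarrow> nat set \<Rightarrow> real" where
  "Qpow N 0 S T = (if S = T then 1 else 0)"
| "Qpow N (Suc n) S T = (\<Sum>U\<in>Omega N. Qtrans N S U * Qpow N n U T)"

definition Mdist :: "nat \<Rightarrow> nat set \<Rightarrow> real" where
  "Mdist N S = 3 ^ card S / (4 ^ N - 1)"

definition is_markov_on_Omega :: "nat \<Rightarrow> bool" where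
  "is_markov_on_Omega N \<longleftrightarrow>
     (\<forall>S\<in>Omega N. \<forall>T\<in>Omega N. Qtrans N S T \<ge> 0) \<and>
     (\<forall>S\<in>Omega N. (\<Sum>T\<in>Omega N. Qtrans N S T) = 1)"

text \<open>Ergodic (finite chain): irreducible and aperiodic, i.e. some power of the transition
  matrix is strictly positive.\<close>
definition ergodic_on_Omega :: "nat \<Rightarrow> bool" where
  "ergodic_on_Omega N \<longleftrightarrow> (\<exists>n. \<forall>S\<in>Omega N. \<forall>T\<in>Omega N. Qpow N n S T > 0)"

definition reversible_wrt :: "nat \<Rightarrow> (nat set \<Rightarrow> real) \<Rightarrow> bool" where
  "reversible_wrt N \<mu> \<longleftrightarrow>
     (\<forall>S\<in>Omega N. \<forall>T\<in>Omega N. \<mu> S * Qtrans N S T = \<mu> T * Qtrans N T S)"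

definition stationary_distribution :: "nat \<Rightarrow> (nat set \<Rightarrow> real) \<Rightarrow> bool" where
  "stationary_distribution N \<mu> \<longleftrightarrow>
     (\<forall>S\<in>Omega N. \<mu> S \<ge> 0) \<and> (\<Sum>S\<in>Omega N. \<mu> S) = 1 \<and>
     (\<forall>T\<in>Omega N. (\<Sum>S\<in>Omega N. \<mu> S * Qtrans N S T) = \<mu> T)"

definition is_eigenpair :: "nat \<Rightarrow> real \<Rightarrow> (nat set \<Rightarrow> real) \<Rightarrow> bool" where
  "is_eigenpair N lam f \<longleftrightarrow>
     (\<exists>S\<in>Omega N. f S \<noteq> 0) \<and>
     (\<forall>S\<in>Omega N. (\<Sum>T\<in>Omega N. Qtrans N S T * f T) = lam * f S)"

text \<open>Second largest eigenvalue (counted with multiplicity): the largest eigenvalue admitting an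
  eigenvector that is not constant on Omega N. (Constants are eigenvectors for the top
  eigenvalue 1; eigenvalue 1 counts again iff its eigenspace has dimension at least 2.)\<close>
definition second_eigenvalue :: "nat \<Rightarrow> real" where
  "second_eigenvalue N =
     Max {lam. \<exists>f. is_eigenpair N lam f \<and> \<not> (\<exists>c. \<forall>S\<in>Omega N. f S = c)}"

definition spectral_gap :: "nat \<Rightarrow> real" where
  "spectral_gap N = 1 - second_eigenvalue N"

end

(*
  Q is reversible with respect to the weights 3^|S|: detailed balance already holds for the
  update of a single pair, whose membership patterns carry the weights 1, 3, 3, 9.  Averaging
  over pairs, Q moves from S to S + x (x not in S) with probability 4|S| / (3N(N-1)) and to
  S - x (x in S) with probability 4(|S|-1) / (9N(N-1)).  Hence the Dirichlet form of g is at
  least 4 / (3N(N-1)) times the edge energy  sum_S sum_(x not in S) 3^|S| (g(S+x) - g(S))^2.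
  On the whole cube Pow {1..N} the weights 3^|S| form a product measure, for which the
  Efron-Stein inequality (by induction on the ground set) bounds the variance by 3/4 of the
  normalised edge energy; extending g to the empty set by g {1} costs at most 2/3 of the energy,
  so on Omega the variance is at most 5/4 of it.  Together, every eigenvalue with a non-constant
  eigenvector is at most 1 - 16 / (15N(N-1)), which is stronger than the claimed bound.
  The maximum defining the second eigenvalue ranges over a finite set, as eigenvectors of
  distinct eigenvalues are orthogonal for the weighted inner product, and over a nonempty one:
  products of  [2j+1 in S] - [2j+2 in S]  over disjoint pairs (times a weight on the unpaired
  element when N is odd) are explicit non-constant eigenvectors.
*)

theory Submission
  imports Defs "HOL-Analysis.Convex"
begin

section \<open>The generator\<close>

lemma Omega_iff: "S \<in> Omega N \<longleftrightarrow> S \<subseteq> {1..N} \<and> S \<noteq> {}"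
  by (simp add: Omega_def)

lemma finite_Omega: "finite (Omega N)"
  by (simp add: Omega_def)

lemma finite_Omega_member: "S \<in> Omega N \<Longrightarrow> finite S"
  by (auto simp: Omega_iff intro: finite_subset)

lemma sum_Pow_eq_Omega:
  "(\<Sum>S\<in>Pow {1..N}. F S) = F {} + (\<Sum>S\<in>Omega N. F S)"
proof -
  have "Pow {1..N} = insert {} (Omega N)" "{} \<notin> Omega N"
    by (auto simp: Omega_def)
  then show ?thesis
    by (simp add: finite_Omega)
qed

definition Qop :: "nat \<Rightarrow> (nat set \<Rightarrow> real) \<Rightarrow> nat set \<Rightarrow> real" where
  "Qop N g S = (\<Sum>T\<in>Omega N. Qtrans N S T * g T)"

definition with_pattern :: "nat set \<Rightarrow> nat \<Rightarrow> nat \<Rightarrow> bool \<Rightarrow> bool \<Rightarrow> nat set" where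
  "with_pattern S c t u v = (S - {c, t}) \<union> (if u then {c} else {}) \<union> (if v then {t} else {})"

(* The expected value of g after the move at the ordered pair (c, t), cf. pat_prob. *)
definition pair_mean :: "(nat set \<Rightarrow> real) \<Rightarrow> nat set \<Rightarrow> nat \<Rightarrow> nat \<Rightarrow> real" where
  "pair_mean g S c t =
    (if c \<in> S then
       if t \<in> S then 5/9 * g S + 2/9 * g (S - {t}) + 2/9 * g (S - {c})
       else 1/3 * g S + 2/3 * g (insert t S)
     else if t \<in> S then 1/3 * g S + 2/3 * g (insert c S) else g S)"

lemma sum_pattern_update:
  assumes c: "c \<in> {1..N}" and t: "t \<in> {1..N}" and "c \<noteq> t" and S: "S \<in> Omega N"
  shows "(\<Sum>T\<in>Omega N. if \<forall>i. i \<notin> {c, t} \<longrightarrow> (i \<in> S \<longleftrightarrow> i \<in> T)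
            then pat_prob (c \<in> S, t \<in> S) (c \<in> T, t \<in> T) * g T else 0) = pair_mean g S c t"
    (is "(\<Sum>T\<in>Omega N. if ?agree T then ?F T else 0) = _")
proof -
  have "(if ?agree {} then ?F {} else 0) = 0"
  proof (cases "?agree {}")
    case True
    with S have "c \<in> S \<or> t \<in> S"
      by (auto simp: Omega_iff)
    then show ?thesis
      by (auto simp: pat_prob_def split: bool.splits)
  qed auto
  then have "(\<Sum>T\<in>Omega N. if ?agree T then ?F T else 0)
      = (\<Sum>T\<in>Pow {1..N}. if ?agree T then ?F T else 0)"
    by (subst sum_Pow_eq_Omega) simp
  also have "\<dots> = (\<Sum>T\<in>{T\<in>Pow {1..N}. ?agree T}. ?F T)"
    by (rule sum.inter_filter[symmetric]) simp
  also have "\<dots> = (\<Sum>p\<in>UNIV. ?F (with_pattern S c t (fst p) (snd p)))"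
    by (rule sum.reindex_bij_witness[where i = "\<lambda>T. (c \<in> T, t \<in> T)"
          and j = "\<lambda>p. with_pattern S c t (fst p) (snd p)", symmetric])
       (use c t S \<open>c \<noteq> t\<close> in \<open>auto simp: with_pattern_def Omega_iff split: if_splits\<close>)
  also have "\<dots> = pair_mean g S c t"
  proof -
    have bool_pairs: "(UNIV :: (bool \<times> bool) set) = {(True, True), (True, False), (False, True), (False, False)}"
      by auto
    have set_eqs:
      "c \<in> S \<Longrightarrow> insert c (S - {c, t}) = S - {t}"
      "t \<in> S \<Longrightarrow> insert t (S - {c, t}) = S - {c}"
      "c \<in> S \<Longrightarrow> insert c (insert t (S - {c, t})) = insert t S"
      "t \<in> S \<Longrightarrow> insert c (insert t (S - {c, t})) = insert c S"
      "t \<in> S \<Longrightarrow> insert t (insert c (S - {t})) = insert c S"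
      "c \<notin> S \<Longrightarrow> t \<notin> S \<Longrightarrow> S - {c, t} = S"
      using \<open>c \<noteq> t\<close> by auto
    show ?thesis
      unfolding bool_pairs using \<open>c \<noteq> t\<close>
      by (cases "c \<in> S"; cases "t \<in> S")
         (simp_all add: with_pattern_def pair_mean_def pat_prob_def set_eqs insert_absorb)
  qed
  finally show ?thesis .
qed

lemma Qop_eq_average_pair_mean:
  assumes S: "S \<in> Omega N"
  shows "Qop N g S =
    (\<Sum>c\<in>{1..N}. \<Sum>t\<in>{1..N} - {c}. pair_mean g S c t) / (real N * (real N - 1))"
proof -
  let ?D = "real N * (real N - 1)"
  let ?agree = "\<lambda>c t T. \<forall>i. i \<notin> {c, t} \<longrightarrow> (i \<in> S \<longleftrightarrow> i \<in> T)"
  let ?F = "\<lambda>c t T. if ?agree c t T then pat_prob (c \<in> S, t \<in> S) (c \<in> T, t \<in> T) * g T else 0"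
  have "Qop N g S = (\<Sum>T\<in>Omega N. \<Sum>c\<in>{1..N}. \<Sum>t\<in>{1..N} - {c}. ?F c t T / ?D)"
    unfolding Qop_def Qtrans_def sum_distrib_right by (intro sum.cong refl) auto
  also have "\<dots> = (\<Sum>c\<in>{1..N}. \<Sum>t\<in>{1..N} - {c}. (\<Sum>T\<in>Omega N. ?F c t T) / ?D)"
    by (subst sum.swap) (simp add: sum.swap[of _ "Omega N"] sum_divide_distrib)
  also have "\<dots> = (\<Sum>c\<in>{1..N}. \<Sum>t\<in>{1..N} - {c}. pair_mean g S c t / ?D)"
    using S by (intro sum.cong refl arg_cong[where f = "\<lambda>x. x / ?D"] sum_pattern_update) auto
  finally show ?thesis
    by (simp add: sum_divide_distrib)
qed

lemma sum_offdiag_swap: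
  assumes "finite A"
  shows "(\<Sum>c\<in>A. \<Sum>t\<in>A - {c}. H c t) = (\<Sum>t\<in>A. \<Sum>c\<in>A - {t}. H c t)"
proof -
  have "A - {x} = {y \<in> A. x \<noteq> y}" "A - {x} = {y \<in> A. y \<noteq> x}" for x
    by auto
  then show ?thesis
    using sum.swap_restrict[OF assms assms, of H "\<lambda>c t. c \<noteq> t"] by simp
qed

lemma sum_offdiag_restrict:
  assumes "finite A"
  shows "(\<Sum>c\<in>A. \<Sum>t\<in>A - {c}. if P c \<and> R t then F c t else 0)
       = (\<Sum>c\<in>{c\<in>A. P c}. \<Sum>t\<in>{t\<in>A. R t} - {c}. F c t)"
proof -
  have "(\<Sum>t\<in>A - {c}. if P c \<and> R t then F c t else 0)
      = (if P c then \<Sum>t\<in>{t\<in>A. R t} - {c}. F c t else 0)" for c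
  proof -
    have "{t\<in>A - {c}. R t} = {t\<in>A. R t} - {c}"
      by auto
    then show ?thesis
      using sum.inter_filter[of "A - {c}" "F c" R] assms by simp
  qed
  then show ?thesis
    using assms by (simp add: sum.inter_filter)
qed

lemma sum_offdiag_one:
  assumes "finite A"
  shows "(\<Sum>c\<in>A. \<Sum>t\<in>A - {c}. 1::real) = real (card A) * (real (card A) - 1)"
proof (cases "A = {}")
  case False
  with assms have "card A \<ge> 1"
    by (simp add: Suc_le_eq card_gt_0_iff)
  with assms show ?thesis
    by (simp add: of_nat_diff cong: sum.cong)
qed simp

lemma pair_mean_split:
  "pair_mean g S c t = g S
     + 2/3 * (if c \<in> S \<and> t \<notin> S then g (insert t S) - g S else 0)
     + 2/3 * (if t \<in> S \<and> c \<notin> S then g (insert c S) - g S else 0)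
     + 2/9 * (if c \<in> S \<and> t \<in> S then g (S - {t}) - g S else 0)
     + 2/9 * (if t \<in> S \<and> c \<in> S then g (S - {c}) - g S else 0)"
  unfolding pair_mean_def by (simp add: field_simps)

lemma sum_pair_mean:
  assumes A: "finite A" and S: "S \<subseteq> A"
  shows "(\<Sum>c\<in>A. \<Sum>t\<in>A - {c}. pair_mean g S c t)
       = real (card A) * (real (card A) - 1) * g S
         + 4/3 * real (card S) * (\<Sum>x\<in>A - S. g (insert x S) - g S)
         + 4/9 * (real (card S) - 1) * (\<Sum>x\<in>S. g (S - {x}) - g S)"
proof -
  let ?up = "\<lambda>c t. if c \<in> S \<and> t \<notin> S then g (insert t S) - g S else 0"
  let ?down = "\<lambda>c t. if c \<in> S \<and> t \<in> S then g (S - {t}) - g S else 0"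
  have fS: "finite S"
    using A S by (rule finite_subset[rotated])
  have "{c \<in> A. c \<in> S} = S" "{t \<in> A. t \<notin> S} = A - S" "{t \<in> A. t \<in> S} = S"
    using S by auto
  then have up: "(\<Sum>c\<in>A. \<Sum>t\<in>A - {c}. ?up c t) = real (card S) * (\<Sum>x\<in>A - S. g (insert x S) - g S)"
    and down_restricted: "(\<Sum>c\<in>A. \<Sum>t\<in>A - {c}. ?down c t) = (\<Sum>c\<in>S. \<Sum>t\<in>S - {c}. g (S - {t}) - g S)"
    by (simp_all add: sum_offdiag_restrict[OF A] flip: Diff_insert2 cong: sum.cong)
  have "(\<Sum>c\<in>S. \<Sum>t\<in>S - {c}. g (S - {t}) - g S)
      = (\<Sum>c\<in>S. (\<Sum>x\<in>S. g (S - {x}) - g S) - (g (S - {c}) - g S))"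
    using fS by (intro sum.cong refl) (simp add: sum_diff1)
  with down_restricted have down: "(\<Sum>c\<in>A. \<Sum>t\<in>A - {c}. ?down c t) = (real (card S) - 1) * (\<Sum>x\<in>S. g (S - {x}) - g S)"
    by (simp only: sum_subtractf sum_constant) (simp add: algebra_simps)
  have "(\<Sum>c\<in>A. \<Sum>t\<in>A - {c}. pair_mean g S c t)
      = (\<Sum>c\<in>A. \<Sum>t\<in>A - {c}. 1::real) * g S
        + 2/3 * (\<Sum>c\<in>A. \<Sum>t\<in>A - {c}. ?up c t) + 2/3 * (\<Sum>c\<in>A. \<Sum>t\<in>A - {c}. ?up t c)
        + 2/9 * (\<Sum>c\<in>A. \<Sum>t\<in>A - {c}. ?down c t) + 2/9 * (\<Sum>c\<in>A. \<Sum>t\<in>A - {c}. ?down t c)"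
    unfolding pair_mean_split by (simp add: sum.distrib sum_distrib_left sum_distrib_right)
  also have "\<dots> = real (card A) * (real (card A) - 1) * g S
        + 4/3 * (\<Sum>c\<in>A. \<Sum>t\<in>A - {c}. ?up c t) + 4/9 * (\<Sum>c\<in>A. \<Sum>t\<in>A - {c}. ?down c t)"
    unfolding sum_offdiag_one[OF A] sum_offdiag_swap[OF A, of "\<lambda>c t. ?up t c"] sum_offdiag_swap[OF A, of "\<lambda>c t. ?down t c"]
    by simp
  finally show ?thesis
    unfolding up down by (simp only: mult.assoc)
qed

lemma Qop_generator:
  assumes N: "N \<ge> 2" and S: "S \<in> Omega N"
  shows "Qop N g S = g S
    + (4/3 * real (card S) * (\<Sum>x\<in>{1..N} - S. g (insert x S) - g S)
       + 4/9 * (real (card S) - 1) * (\<Sum>x\<in>S. g (S - {x}) - g S)) / (real N * (real N - 1))"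
proof -
  have "real N * (real N - 1) \<noteq> 0"
    using N by simp
  moreover have "S \<subseteq> {1..N}"
    using S by (simp add: Omega_iff)
  ultimately show ?thesis
    by (simp add: Qop_eq_average_pair_mean[OF S] sum_pair_mean add_divide_distrib)
qed

lemma is_eigenpair_iff:
  "is_eigenpair N lam f \<longleftrightarrow> (\<exists>S\<in>Omega N. f S \<noteq> 0) \<and> (\<forall>S\<in>Omega N. Qop N f S = lam * f S)"
  by (simp add: is_eigenpair_def Qop_def)

section \<open>Markov property, reversibility, ergodicity\<close>

lemma pat_prob_nonneg: "pat_prob p q \<ge> 0"
  by (cases p; cases q) (auto simp: pat_prob_def split: bool.splits)

lemma Qtrans_nonneg: "Qtrans N S T \<ge> 0"
proof -
  have "real N * (real N - 1) \<ge> 0"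
    by (cases N) simp_all
  then show ?thesis
    unfolding Qtrans_def by (intro sum_nonneg) (simp add: pat_prob_nonneg)
qed

lemma Qtrans_row_sum:
  assumes "N \<ge> 2" "S \<in> Omega N"
  shows "(\<Sum>T\<in>Omega N. Qtrans N S T) = 1"
  using Qop_generator[OF assms, of "\<lambda>_. 1"] by (simp add: Qop_def)

lemma Qop_const:
  assumes "N \<ge> 2" "S \<in> Omega N"
  shows "Qop N (\<lambda>_. c) S = c"
  using Qtrans_row_sum[OF assms] by (simp add: Qop_def flip: sum_distrib_right)

lemma markov_Omega:
  assumes "N \<ge> 2"
  shows "is_markov_on_Omega N"
  using Qtrans_nonneg Qtrans_row_sum[OF assms] by (simp add: is_markov_on_Omega_def)

lemma pat_prob_detailed_balance:
  "3 ^ (of_bool (fst p) + of_bool (snd p)) * pat_prob p q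
   = 3 ^ (of_bool (fst q) + of_bool (snd q)) * pat_prob q p"
  by (cases p; cases q) (simp add: pat_prob_def split: bool.splits)

lemma card_split_pair:
  assumes "finite U" "c \<noteq> t"
  shows "card U = card (U - {c, t}) + of_bool (c \<in> U) + of_bool (t \<in> U)"
proof -
  have "U = (U - {c, t}) \<union> (U \<inter> {c, t})"
    by auto
  then have "card U = card (U - {c, t}) + card (U \<inter> {c, t})"
    using assms(1) by (subst card_Un_disjoint[symmetric]) auto
  moreover have "card (U \<inter> {c, t}) = of_bool (c \<in> U) + of_bool (t \<in> U)"
    using assms(2) by (cases "c \<in> U"; cases "t \<in> U") (auto simp: Int_insert_right)
  ultimately show ?thesis
    by simp
qed

lemma Qtrans_detailed_balance:
  assumes "finite S" "finite T"
  shows "3 ^ card S * Qtrans N S T = 3 ^ card T * Qtrans N T S"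
  unfolding Qtrans_def sum_distrib_left
proof (intro sum.cong refl)
  fix c t
  assume "c \<in> {1..N}" "t \<in> {1..N} - {c}"
  then have "c \<noteq> t"
    by simp
  show "3 ^ card S * (if \<forall>i. i \<notin> {c, t} \<longrightarrow> (i \<in> S) = (i \<in> T)
           then pat_prob (c \<in> S, t \<in> S) (c \<in> T, t \<in> T) / (real N * (real N - 1)) else 0)
      = 3 ^ card T * (if \<forall>i. i \<notin> {c, t} \<longrightarrow> (i \<in> T) = (i \<in> S)
           then pat_prob (c \<in> T, t \<in> T) (c \<in> S, t \<in> S) / (real N * (real N - 1)) else 0)"
  proof (cases "\<forall>i. i \<notin> {c, t} \<longrightarrow> (i \<in> S) = (i \<in> T)")
    case True
    then have "S - {c, t} = T - {c, t}"
      by auto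
    then show ?thesis
      using True card_split_pair[OF assms(1) \<open>c \<noteq> t\<close>] card_split_pair[OF assms(2) \<open>c \<noteq> t\<close>]
        pat_prob_detailed_balance[of "(c \<in> S, t \<in> S)" "(c \<in> T, t \<in> T)"]
      by (simp add: power_add mult_ac)
  next
    case False
    then have "\<not> (\<forall>i. i \<notin> {c, t} \<longrightarrow> (i \<in> T) = (i \<in> S))"
      by auto
    with False show ?thesis
      by (simp only: if_False)
  qed
qed

lemma reversible_Mdist: "reversible_wrt N (Mdist N)"
  unfolding reversible_wrt_def
proof (intro ballI)
  fix S T
  assume "S \<in> Omega N" "T \<in> Omega N"
  then have "3 ^ card S * Qtrans N S T = 3 ^ card T * Qtrans N T S"
    by (intro Qtrans_detailed_balance finite_Omega_member)
  then show "Mdist N S * Qtrans N S T = Mdist N T * Qtrans N T S"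
    by (simp only: Mdist_def times_divide_eq_left)
qed

lemma sum_pow_card_Pow:
  fixes a :: "'a :: comm_semiring_1"
  assumes "finite B"
  shows "(\<Sum>S\<in>Pow B. a ^ card S) = (a + 1) ^ card B"
  using prod_add[OF assms, of "\<lambda>_. a" "\<lambda>_. 1"] by simp

lemma sum_weights_Omega: "(\<Sum>S\<in>Omega N. (3::real) ^ card S) = 4 ^ N - 1"
  using sum_Pow_eq_Omega[of "\<lambda>S. (3::real) ^ card S" N] sum_pow_card_Pow[of "{1..N}" "3::real"]
  by simp

lemma stationary_Mdist:
  assumes N: "N \<ge> 2"
  shows "stationary_distribution N (Mdist N)"
proof -
  have pos: "(4::real) ^ N - 1 > 0"
    using N by (simp add: one_less_power)
  have "(\<Sum>S\<in>Omega N. Mdist N S * Qtrans N S T) = Mdist N T" if T: "T \<in> Omega N" for T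
  proof -
    have "(\<Sum>S\<in>Omega N. Mdist N S * Qtrans N S T) = (\<Sum>S\<in>Omega N. Mdist N T * Qtrans N T S)"
      using reversible_Mdist T unfolding reversible_wrt_def by (intro sum.cong) auto
    also have "\<dots> = Mdist N T"
      using Qtrans_row_sum[OF N T] by (simp flip: sum_distrib_left)
    finally show ?thesis .
  qed
  moreover have "(\<Sum>S\<in>Omega N. Mdist N S) = 1"
    using sum_weights_Omega[of N] pos by (simp add: Mdist_def flip: sum_divide_distrib)
  ultimately show ?thesis
    using pos by (simp add: stationary_distribution_def Mdist_def)
qed

lemma Qtrans_pos:
  assumes N: "N \<ge> 2" and c: "c \<in> {1..N}" and t: "t \<in> {1..N}" "t \<noteq> c"
    and agree: "\<forall>i. i \<notin> {c, t} \<longrightarrow> (i \<in> S \<longleftrightarrow> i \<in> T)"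
    and p: "pat_prob (c \<in> S, t \<in> S) (c \<in> T, t \<in> T) > 0"
  shows "Qtrans N S T > 0"
proof -
  have "real N * (real N - 1) > 0"
    using N by simp
  then have term_nonneg:
    "0 \<le> (if \<forall>i. i \<notin> {c', t'} \<longrightarrow> (i \<in> S \<longleftrightarrow> i \<in> T)
           then pat_prob (c' \<in> S, t' \<in> S) (c' \<in> T, t' \<in> T) / (real N * (real N - 1)) else 0)"
    for c' t'
    by (simp add: pat_prob_nonneg)
  have "(\<Sum>t'\<in>{1..N} - {c}. if \<forall>i. i \<notin> {c, t'} \<longrightarrow> (i \<in> S \<longleftrightarrow> i \<in> T)
      then pat_prob (c \<in> S, t' \<in> S) (c \<in> T, t' \<in> T) / (real N * (real N - 1)) else 0) > 0"
    using t agree p \<open>real N * (real N - 1) > 0\<close> by (intro sum_pos2[of _ t] term_nonneg) auto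
  then show ?thesis
    unfolding Qtrans_def using c by (intro sum_pos2[OF _ c] sum_nonneg term_nonneg) auto
qed

lemma Qtrans_self_pos:
  assumes "N \<ge> 2"
  shows "Qtrans N S S > 0"
  using assms
  by (intro Qtrans_pos[of N 1 2]) (auto simp: pat_prob_def split: bool.splits)

lemma Qtrans_insert_pos:
  assumes N: "N \<ge> 2" and S: "S \<in> Omega N" and x: "x \<in> {1..N} - S"
  shows "Qtrans N S (insert x S) > 0"
proof -
  obtain c where "c \<in> S"
    using S by (auto simp: Omega_iff)
  with S x show ?thesis
    by (intro Qtrans_pos[OF N, of c x]) (auto simp: Omega_iff pat_prob_def)
qed

lemma Qtrans_remove_pos:
  assumes N: "N \<ge> 2" and S: "S \<in> Omega N" and x: "x \<in> S" and "S - {x} \<noteq> {}"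
  shows "Qtrans N S (S - {x}) > 0"
proof -
  obtain c where "c \<in> S" "c \<noteq> x"
    using \<open>S - {x} \<noteq> {}\<close> by auto
  with S x show ?thesis
    by (intro Qtrans_pos[OF N, of c x]) (auto simp: Omega_iff pat_prob_def)
qed

lemma Qpow_nonneg: "Qpow N n S T \<ge> 0"
  by (induction n arbitrary: S) (auto intro!: sum_nonneg mult_nonneg_nonneg Qtrans_nonneg)

lemma Qpow_Suc_pos:
  assumes "U \<in> Omega N" "Qtrans N S U > 0" "Qpow N n U T > 0"
  shows "Qpow N (Suc n) S T > 0"
  using assms finite_Omega
  by (auto intro!: sum_pos2[of _ U] mult_nonneg_nonneg Qtrans_nonneg Qpow_nonneg)

lemma Qtrans_step_towards:
  assumes N: "N \<ge> 2" and S: "S \<in> Omega N" and T: "T \<in> Omega N" and "S \<noteq> T"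
  obtains U where "U \<in> Omega N" "Qtrans N S U > 0"
    "card (U - T) + card (T - U) < card (S - T) + card (T - S)"
proof -
  have fin: "finite S" "finite T"
    using S T finite_Omega_member by auto
  consider x where "x \<in> T - S" | x where "x \<in> S - T" "T \<subseteq> S"
    using \<open>S \<noteq> T\<close> by blast
  then show ?thesis
  proof cases
    case (1 x)
    have "insert x S - T = S - T" "T - insert x S = (T - S) - {x}"
      using 1 by auto
    moreover have "card ((T - S) - {x}) < card (T - S)"
      using 1 fin by (intro card_Diff1_less) auto
    moreover have "insert x S \<in> Omega N"
      using S T 1 by (auto simp: Omega_iff)
    ultimately show ?thesis
      using Qtrans_insert_pos[OF N S] 1 T by (intro that[of "insert x S"]) (auto simp: Omega_iff)
  next
    case (2 x)
    have "S - {x} - T = (S - T) - {x}" "T - (S - {x}) = T - S"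
      using 2 by auto
    moreover have "card ((S - T) - {x}) < card (S - T)"
      using 2 fin by (intro card_Diff1_less) auto
    moreover have "S - {x} \<noteq> {}"
      using 2 T by (auto simp: Omega_iff)
    moreover from this have "S - {x} \<in> Omega N"
      using S by (auto simp: Omega_iff)
    ultimately show ?thesis
      using Qtrans_remove_pos[OF N S] 2 by (intro that[of "S - {x}"]) auto
  qed
qed

lemma Qpow_pos_if_close:
  assumes N: "N \<ge> 2"
  shows "S \<in> Omega N \<Longrightarrow> T \<in> Omega N \<Longrightarrow> card (S - T) + card (T - S) \<le> k
    \<Longrightarrow> Qpow N k S T > 0"
proof (induction k arbitrary: S)
  case 0
  then have "S = T"
    using finite_Omega_member by auto
  then show ?case
    by simp
next
  case (Suc k S)
  show ?case
  proof (cases "S = T")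
    case True
    then show ?thesis
      using Suc Qtrans_self_pos[OF N] by (intro Qpow_Suc_pos[of T]) auto
  next
    case False
    then obtain U where "U \<in> Omega N" "Qtrans N S U > 0"
      "card (U - T) + card (T - U) < card (S - T) + card (T - S)"
      using Qtrans_step_towards[OF N Suc.prems(1,2)] by blast
    then show ?thesis
      using Suc by (intro Qpow_Suc_pos[of U]) auto
  qed
qed

lemma ergodic_Omega:
  assumes N: "N \<ge> 2"
  shows "ergodic_on_Omega N"
  unfolding ergodic_on_Omega_def
proof (intro exI[of _ "2 * N"] ballI)
  fix S T
  assume S: "S \<in> Omega N" and T: "T \<in> Omega N"
  then have "card (S - T) \<le> N" "card (T - S) \<le> N"
    using card_mono[of "{1..N}" "S - T"] card_mono[of "{1..N}" "T - S"] by (auto simp: Omega_iff)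
  then show "Qpow N (2 * N) S T > 0"
    using Qpow_pos_if_close[OF N S T] by simp
qed

section \<open>The Dirichlet form\<close>

lemma Qop_self_adjoint:
  "(\<Sum>S\<in>Omega N. 3 ^ card S * f S * Qop N g S) = (\<Sum>S\<in>Omega N. 3 ^ card S * Qop N f S * g S)"
proof -
  have "(\<Sum>S\<in>Omega N. 3 ^ card S * f S * Qop N g S)
      = (\<Sum>S\<in>Omega N. \<Sum>T\<in>Omega N. 3 ^ card S * Qtrans N S T * f S * g T)"
    by (simp add: Qop_def sum_distrib_left mult_ac)
  also have "\<dots> = (\<Sum>S\<in>Omega N. \<Sum>T\<in>Omega N. 3 ^ card T * Qtrans N T S * f S * g T)"
  proof (intro sum.cong refl)
    fix S T
    assume "S \<in> Omega N" "T \<in> Omega N"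
    then have "3 ^ card S * Qtrans N S T = 3 ^ card T * Qtrans N T S"
      by (intro Qtrans_detailed_balance finite_Omega_member)
    then show "3 ^ card S * Qtrans N S T * f S * g T = 3 ^ card T * Qtrans N T S * f S * g T"
      by simp
  qed
  also have "\<dots> = (\<Sum>T\<in>Omega N. \<Sum>S\<in>Omega N. 3 ^ card T * Qtrans N T S * f S * g T)"
    by (rule sum.swap)
  also have "\<dots> = (\<Sum>T\<in>Omega N. 3 ^ card T * Qop N f T * g T)"
    by (simp add: Qop_def sum_distrib_left sum_distrib_right mult_ac)
  finally show ?thesis .
qed

lemma sum_weight_Qop:
  assumes "N \<ge> 2"
  shows "(\<Sum>S\<in>Omega N. 3 ^ card S * Qop N f S) = (\<Sum>S\<in>Omega N. 3 ^ card S * f S)"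
  using Qop_self_adjoint[where f = "\<lambda>_. 1" and g = f] Qop_const[OF assms] by simp

lemma sum_Omega_remove_eq_insert:
  assumes "\<And>x. K {x} x = 0"
  shows "(\<Sum>S\<in>Omega N. \<Sum>x\<in>S. K S x) = (\<Sum>S\<in>Omega N. \<Sum>x\<in>{1..N} - S. K (insert x S) x)"
proof -
  have fin: "\<forall>S\<in>Omega N. finite S" "\<forall>S\<in>Omega N. finite ({1..N} - S)"
    using finite_Omega_member by auto
  have "(\<Sum>S\<in>Omega N. \<Sum>x\<in>S. K S x) = (\<Sum>(S, x)\<in>Sigma (Omega N) (\<lambda>S. S). K S x)"
    by (rule sum.Sigma[OF finite_Omega fin(1)])
  also have "\<dots> = (\<Sum>(S, x)\<in>{(S, x)\<in>Sigma (Omega N) (\<lambda>S. S). S \<noteq> {x}}. K S x)"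
    using fin assms by (intro sum.mono_neutral_right finite_SigmaI finite_Omega) auto
  also have "\<dots> = (\<Sum>(S, x)\<in>Sigma (Omega N) (\<lambda>S. {1..N} - S). K (insert x S) x)"
    by (rule sum.reindex_bij_witness[where j = "\<lambda>(S, x). (S - {x}, x)" and i = "\<lambda>(S, x). (insert x S, x)"])
       (auto simp: Omega_iff insert_absorb subset_iff)
  also have "\<dots> = (\<Sum>S\<in>Omega N. \<Sum>x\<in>{1..N} - S. K (insert x S) x)"
    by (rule sum.Sigma[OF finite_Omega fin(2), symmetric])
  finally show ?thesis .
qed

lemma dirichlet_form_pointwise:
  assumes N: "N \<ge> 2" and S: "S \<in> Omega N"
  shows "real N * (real N - 1) * (3 ^ card S * g S * (g S - Qop N g S))
    = 4/3 * ((\<Sum>x\<in>{1..N} - S. real (card S) * 3 ^ card S * g S * (g S - g (insert x S)))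
           + (\<Sum>x\<in>S. 1/3 * (real (card S) - 1) * 3 ^ card S * g S * (g S - g (S - {x}))))"
proof -
  have "real N * (real N - 1) \<noteq> 0"
    using N by simp
  then have "real N * (real N - 1) * (3 ^ card S * g S * (g S - Qop N g S))
    = 4/3 * (real (card S) * 3 ^ card S * g S * (\<Sum>x\<in>{1..N} - S. g S - g (insert x S)))
      + 4/3 * (1/3 * (real (card S) - 1) * 3 ^ card S * g S * (\<Sum>x\<in>S. g S - g (S - {x})))"
    by (simp add: Qop_generator[OF N S] sum_subtractf field_simps)
  then show ?thesis
    by (simp only: distrib_left sum_distrib_left)
qed

lemma dirichlet_form:
  assumes N: "N \<ge> 2"
  shows "real N * (real N - 1) * (\<Sum>S\<in>Omega N. 3 ^ card S * g S * (g S - Qop N g S))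
       = 4/3 * (\<Sum>S\<in>Omega N. \<Sum>x\<in>{1..N} - S.
                  real (card S) * 3 ^ card S * (g (insert x S) - g S)^2)"
proof -
  let ?up = "\<lambda>S x. real (card S) * 3 ^ card S * g S * (g S - g (insert x S))"
  \<comment> \<open>The removal terms, reindexed by \<open>S = insert x S'\<close>, pair up with the addition terms.\<close>
  define K where "K S x = 1/3 * (real (card S) - 1) * 3 ^ card S * g S * (g S - g (S - {x}))" for S x
  have K_singleton: "K {x} x = 0" for x
    by (simp add: K_def)
  have K_insert: "K (insert x S) x = real (card S) * 3 ^ card S * g (insert x S) * (g (insert x S) - g S)"
    if "S \<in> Omega N" "x \<in> {1..N} - S" for S x
  proof -
    have "card (insert x S) = Suc (card S)" "insert x S - {x} = S"
      using that finite_Omega_member[of S N] by auto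
    then show ?thesis
      by (simp add: K_def)
  qed
  have "real N * (real N - 1) * (\<Sum>S\<in>Omega N. 3 ^ card S * g S * (g S - Qop N g S))
      = (\<Sum>S\<in>Omega N. 4/3 * ((\<Sum>x\<in>{1..N} - S. ?up S x) + (\<Sum>x\<in>S. K S x)))"
    unfolding K_def by (subst sum_distrib_left) (rule sum.cong[OF refl dirichlet_form_pointwise[OF N]])
  also have "\<dots> = 4/3 * ((\<Sum>S\<in>Omega N. \<Sum>x\<in>{1..N} - S. ?up S x) + (\<Sum>S\<in>Omega N. \<Sum>x\<in>S. K S x))"
    by (simp only: sum.distrib flip: sum_distrib_left)
  also have "(\<Sum>S\<in>Omega N. \<Sum>x\<in>S. K S x)
      = (\<Sum>S\<in>Omega N. \<Sum>x\<in>{1..N} - S. real (card S) * 3 ^ card S * g (insert x S) * (g (insert x S) - g S))"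
    unfolding sum_Omega_remove_eq_insert[of K, OF K_singleton] by (intro sum.cong refl) (simp add: K_insert)
  also have "(\<Sum>S\<in>Omega N. \<Sum>x\<in>{1..N} - S. ?up S x) + \<dots>
      = (\<Sum>S\<in>Omega N. \<Sum>x\<in>{1..N} - S. real (card S) * 3 ^ card S * (g (insert x S) - g S)^2)"
    by (simp add: power2_eq_square algebra_simps flip: sum.distrib)
  finally show ?thesis .
qed

section \<open>A Poincare inequality\<close>

lemma weighted_cauchy_schwarz:
  fixes w g :: "'a \<Rightarrow> real"
  assumes "\<And>i. i \<in> I \<Longrightarrow> w i \<ge> 0"
  shows "(\<Sum>i\<in>I. w i * g i)^2 \<le> (\<Sum>i\<in>I. w i) * (\<Sum>i\<in>I. w i * (g i)^2)"
proof -
  have "(\<Sum>i\<in>I. w i * g i) = (\<Sum>i\<in>I. sqrt (w i) * (sqrt (w i) * g i))"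
    "(\<Sum>i\<in>I. w i) = (\<Sum>i\<in>I. (sqrt (w i))^2)"
    "(\<Sum>i\<in>I. w i * (g i)^2) = (\<Sum>i\<in>I. (sqrt (w i) * g i)^2)"
    using assms by (auto intro!: sum.cong simp: power_mult_distrib simp flip: mult.assoc)
  then show ?thesis
    using Cauchy_Schwarz_ineq_sum[of "\<lambda>i. sqrt (w i)" "\<lambda>i. sqrt (w i) * g i" I] by simp
qed

lemma sum_Pow_insert:
  assumes "finite B" "b \<notin> B"
  shows "(\<Sum>S\<in>Pow (insert b B). F S) = (\<Sum>S\<in>Pow B. F S + F (insert b S))"
proof -
  have "inj_on (insert b) (Pow B)"
    using assms by (intro inj_onI) (metis Diff_insert_absorb PowD subset_iff)
  moreover have "Pow B \<inter> insert b ` Pow B = {}"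
    using assms by auto
  ultimately show ?thesis
    using assms by (simp add: Pow_insert sum.union_disjoint sum.reindex sum.distrib)
qed

lemma sum_Pow_insert_weighted:
  fixes F :: "'a set \<Rightarrow> 'b :: comm_semiring_1"
  assumes "finite B" "b \<notin> B"
  shows "(\<Sum>S\<in>Pow (insert b B). a ^ card S * F S)
       = (\<Sum>S\<in>Pow B. a ^ card S * F S) + a * (\<Sum>S\<in>Pow B. a ^ card S * F (insert b S))"
proof -
  have "card (insert b S) = Suc (card S)" if "S \<subseteq> B" for S
  proof -
    have "finite S" "b \<notin> S"
      using that assms finite_subset[of S B] by auto
    then show ?thesis
      by simp
  qed
  then have "(\<Sum>S\<in>Pow B. a ^ card (insert b S) * F (insert b S))
      = a * (\<Sum>S\<in>Pow B. a ^ card S * F (insert b S))"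
    by (subst sum_distrib_left, intro sum.cong) (auto simp: mult.assoc)
  then show ?thesis
    by (simp add: sum_Pow_insert[OF assms] sum.distrib)
qed

definition cube_energy :: "real \<Rightarrow> 'a set \<Rightarrow> ('a set \<Rightarrow> real) \<Rightarrow> real" where
  "cube_energy a B f = (\<Sum>S\<in>Pow B. \<Sum>x\<in>B - S. a ^ card S * (f (insert x S) - f S)^2)"

lemma cube_energy_insert:
  assumes B: "finite B" "b \<notin> B"
  shows "cube_energy a (insert b B) f
    = (\<Sum>S\<in>Pow B. a ^ card S * (f (insert b S) - f S)^2) + cube_energy a B f
      + a * cube_energy a B (\<lambda>S. f (insert b S))"
proof -
  have step: "(\<Sum>x\<in>insert b B - S. a ^ card S * (f (insert x S) - f S)^2)
        + (\<Sum>x\<in>insert b B - insert b S. a ^ card (insert b S) * (f (insert x (insert b S)) - f (insert b S))^2)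
      = a ^ card S * (f (insert b S) - f S)^2 + (\<Sum>x\<in>B - S. a ^ card S * (f (insert x S) - f S)^2)
        + a * (\<Sum>x\<in>B - S. a ^ card S * (f (insert b (insert x S)) - f (insert b S))^2)"
    if "S \<in> Pow B" for S
  proof -
    have "finite S" "b \<notin> S" "insert b B - S = insert b (B - S)" "insert b B - insert b S = B - S"
      using that B by (auto intro: finite_subset)
    then show ?thesis
      using B by (simp add: sum_distrib_left insert_commute mult.assoc)
  qed
  have "cube_energy a (insert b B) f
      = (\<Sum>S\<in>Pow B. (\<Sum>x\<in>insert b B - S. a ^ card S * (f (insert x S) - f S)^2)
        + (\<Sum>x\<in>insert b B - insert b S. a ^ card (insert b S) * (f (insert x (insert b S)) - f (insert b S))^2))"
    unfolding cube_energy_def by (rule sum_Pow_insert[OF B])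
  also have "\<dots> = (\<Sum>S\<in>Pow B. a ^ card S * (f (insert b S) - f S)^2 + (\<Sum>x\<in>B - S. a ^ card S * (f (insert x S) - f S)^2)
        + a * (\<Sum>x\<in>B - S. a ^ card S * (f (insert b (insert x S)) - f (insert b S))^2))"
    by (rule sum.cong[OF refl step])
  finally show ?thesis
    by (simp add: cube_energy_def sum.distrib sum_distrib_left)
qed

(* q0, m0 and q1, m1 are the second and first moments on the two halves of the cube split along
   a new coordinate; E0, E1 their energies and E the energy of the edges between the halves. *)
lemma variance_tensor_step:
  fixes a Z q0 q1 m0 m1 E E0 E1 :: real
  assumes a: "a \<ge> 0"
    and IH0: "(a + 1) * (Z * q0 - m0^2) \<le> a * Z * E0"
    and IH1: "(a + 1) * (Z * q1 - m1^2) \<le> a * Z * E1"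
    and CS: "(m1 - m0)^2 \<le> Z * E"
  shows "(a + 1) * ((a + 1) * Z * (q0 + a * q1) - (m0 + a * m1)^2) \<le> a * ((a + 1) * Z) * (E + E0 + a * E1)"
proof -
  have "a * (a + 1) * (m1 - m0)^2 \<le> a * (a + 1) * (Z * E)"
    using a CS by (intro mult_left_mono) simp_all
  moreover have "(a + 1) * (Z * q0 - m0^2) * (a + 1) \<le> a * Z * E0 * (a + 1)"
    "(a + 1) * (Z * q1 - m1^2) * (a * (a + 1)) \<le> a * Z * E1 * (a * (a + 1))"
    using IH0 IH1 a by (intro mult_right_mono; simp)+
  ultimately show ?thesis
    by (simp add: power2_eq_square algebra_simps)
qed

lemma cube_poincare:
  fixes f :: "'a set \<Rightarrow> real"
  assumes "finite B" and a: "a \<ge> 0"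
  shows "(a + 1) * ((a + 1) ^ card B * (\<Sum>S\<in>Pow B. a ^ card S * (f S)^2) - (\<Sum>S\<in>Pow B. a ^ card S * f S)^2)
         \<le> a * (a + 1) ^ card B * cube_energy a B f"
  using assms(1)
proof (induction B arbitrary: f rule: finite_induct)
  case empty
  then show ?case
    by (simp add: cube_energy_def power2_eq_square algebra_simps)
next
  case (insert b B f)
  define f1 where "f1 S = f (insert b S)" for S
  define Z where "Z = (a + 1) ^ card B"
  define q0 where "q0 = (\<Sum>S\<in>Pow B. a ^ card S * (f S)^2)"
  define q1 where "q1 = (\<Sum>S\<in>Pow B. a ^ card S * (f1 S)^2)"
  define m0 where "m0 = (\<Sum>S\<in>Pow B. a ^ card S * f S)"
  define m1 where "m1 = (\<Sum>S\<in>Pow B. a ^ card S * f1 S)"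
  define E where "E = (\<Sum>S\<in>Pow B. a ^ card S * (f1 S - f S)^2)"
  have q: "(\<Sum>S\<in>Pow (insert b B). a ^ card S * (f S)^2) = q0 + a * q1"
    and m: "(\<Sum>S\<in>Pow (insert b B). a ^ card S * f S) = m0 + a * m1"
    unfolding sum_Pow_insert_weighted[OF insert.hyps] q0_def q1_def m0_def m1_def f1_def by simp_all
  have energy: "cube_energy a (insert b B) f = E + cube_energy a B f + a * cube_energy a B f1"
    unfolding cube_energy_insert[OF insert.hyps] E_def f1_def ..
  have IH0: "(a + 1) * (Z * q0 - m0^2) \<le> a * Z * cube_energy a B f"
    and IH1: "(a + 1) * (Z * q1 - m1^2) \<le> a * Z * cube_energy a B f1"
    using insert.IH unfolding Z_def q0_def q1_def m0_def m1_def by blast+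
  have CS: "(m1 - m0)^2 \<le> Z * E"
  proof -
    have "(\<Sum>S\<in>Pow B. a ^ card S * (f1 S - f S))^2 \<le> (\<Sum>S\<in>Pow B. a ^ card S) * E"
      unfolding E_def using a by (intro weighted_cauchy_schwarz) simp
    moreover have "(\<Sum>S\<in>Pow B. a ^ card S * (f1 S - f S)) = m1 - m0"
      unfolding m1_def m0_def by (simp add: algebra_simps sum_subtractf)
    ultimately show ?thesis
      using sum_pow_card_Pow[OF insert.hyps(1), of a] by (simp add: Z_def add.commute)
  qed
  have "(a + 1) * ((a + 1) * Z * (q0 + a * q1) - (m0 + a * m1)^2)
      \<le> a * ((a + 1) * Z) * (E + cube_energy a B f + a * cube_energy a B f1)"
    by (rule variance_tensor_step[OF a IH0 IH1 CS])
  moreover have "(a + 1) ^ card (insert b B) = (a + 1) * Z"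
    using insert.hyps by (simp add: Z_def)
  ultimately show ?case
    unfolding q m energy by simp
qed

definition edge_energy :: "nat \<Rightarrow> (nat set \<Rightarrow> real) \<Rightarrow> real" where
  "edge_energy N g = (\<Sum>S\<in>Omega N. \<Sum>x\<in>{1..N} - S. 3 ^ card S * (g (insert x S) - g S)^2)"

lemma square_diff_le: "((a::real) - b)^2 \<le> 2 * a^2 + 2 * b^2"
  using zero_le_power2[of "a + b"] unfolding power2_sum power2_diff by linarith

lemma singletons_spread_le_edge_energy:
  assumes N: "N \<ge> 2"
  shows "(\<Sum>x\<in>{1..N}. (g {x} - g {1})^2) \<le> 2/3 * edge_energy N g"
proof -
  let ?A = "{1..N}"
  let ?d = "\<lambda>S x. 3 ^ card S * (g (insert x S) - g S)^2"
  have one: "1 \<in> ?A"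
    using N by simp
  have "(\<Sum>x\<in>?A - {1}. ?d {1} x + ?d {x} 1) = (\<Sum>x\<in>?A - {1}. ?d {1} x) + (\<Sum>x\<in>?A - {1}. ?d {x} 1)"
    by (rule sum.distrib)
  also have "(\<Sum>x\<in>?A - {1}. ?d {x} 1) \<le> (\<Sum>x\<in>?A - {1}. \<Sum>y\<in>?A - {x}. ?d {x} y)"
    using one by (intro sum_mono member_le_sum) auto
  also have "(\<Sum>x\<in>?A - {1}. ?d {1} x) + (\<Sum>x\<in>?A - {1}. \<Sum>y\<in>?A - {x}. ?d {x} y)
      = (\<Sum>x\<in>?A. \<Sum>y\<in>?A - {x}. ?d {x} y)"
    using sum.remove[OF finite_atLeastAtMost one, of "\<lambda>x. \<Sum>y\<in>?A - {x}. ?d {x} y"] by simp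
  also have "\<dots> = (\<Sum>S\<in>(\<lambda>x. {x}) ` ?A. \<Sum>y\<in>?A - S. ?d S y)"
    by (simp add: sum.reindex)
  also have "\<dots> \<le> edge_energy N g"
    unfolding edge_energy_def
    by (intro sum_mono2 finite_Omega sum_nonneg) (auto simp: Omega_iff)
  finally have singleton_edges: "(\<Sum>x\<in>?A - {1}. ?d {1} x + ?d {x} 1) \<le> edge_energy N g"
    by simp
  have "(\<Sum>x\<in>?A. (g {x} - g {1})^2) = (\<Sum>x\<in>?A - {1}. (g {x} - g {1})^2)"
    using sum.remove[OF finite_atLeastAtMost one, of "\<lambda>x. (g {x} - g {1})^2"] by simp
  also have "\<dots> \<le> (\<Sum>x\<in>?A - {1}. 2/3 * (?d {1} x + ?d {x} 1))"
  proof (rule sum_mono)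
    fix x :: nat
    have "insert x {1} = {1, x}" "insert 1 {x} = {1, x}"
      by auto
    then have "(g {x} - g {1})^2 = ((g (insert x {1}) - g {1}) - (g (insert 1 {x}) - g {x}))^2"
      by simp
    also have "\<dots> \<le> 2 * (g (insert x {1}) - g {1})^2 + 2 * (g (insert 1 {x}) - g {x})^2"
      by (rule square_diff_le)
    finally show "(g {x} - g {1})^2 \<le> 2/3 * (?d {1} x + ?d {x} 1)"
      by simp
  qed
  also have "\<dots> \<le> 2/3 * edge_energy N g"
    unfolding sum_distrib_left[symmetric] using singleton_edges by (rule mult_left_mono) simp
  finally show ?thesis .
qed

lemma poincare_Omega:
  assumes N: "N \<ge> 2" and mean: "(\<Sum>S\<in>Omega N. 3 ^ card S * g S) = 0"
  shows "(\<Sum>S\<in>Omega N. 3 ^ card S * (g S)^2) \<le> 5/4 * edge_energy N g"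
proof -
  \<comment> \<open>Extend g to the whole cube; this costs the spread of g over the singletons.\<close>
  define v where "v = g {1}"
  define G where "G = g({} := v)"
  define X where "X = (\<Sum>S\<in>Omega N. 3 ^ card S * (g S)^2)"
  have G_empty: "G {} = v"
    by (simp add: G_def)
  have G_insert: "G (insert x S) = g (insert x S)" for x S
    by (simp add: G_def)
  have G_Omega: "G S = g S" if "S \<in> Omega N" for S
    using that by (auto simp: G_def Omega_iff)
  have "(\<Sum>S\<in>Pow {1..N}. 3 ^ card S * (G S)^2) = v^2 + X"
    unfolding sum_Pow_eq_Omega X_def by (simp add: G_empty G_Omega cong: sum.cong)
  moreover have "(\<Sum>S\<in>Pow {1..N}. 3 ^ card S * G S) = v"
    unfolding sum_Pow_eq_Omega using mean by (simp add: G_empty G_Omega cong: sum.cong)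
  moreover have "cube_energy 3 {1..N} G = (\<Sum>x\<in>{1..N}. (g {x} - v)^2) + edge_energy N g"
    (is "_ = ?R")
    unfolding cube_energy_def edge_energy_def sum_Pow_eq_Omega
    by (simp add: G_empty G_insert G_Omega cong: sum.cong)
  ultimately have "4 * (4 ^ N * (v^2 + X) - v^2) \<le> 3 * 4 ^ N * ?R"
    using cube_poincare[of "{1..N}" 3 G] by simp
  moreover have "4 * 4 ^ N * X \<le> 4 * (4 ^ N * (v^2 + X) - v^2)"
    using mult_right_mono[OF one_le_power[of "4::real" N] zero_le_power2[of v]]
    by (simp add: algebra_simps)
  ultimately have "4 ^ N * (4 * X) \<le> 4 ^ N * (3 * ?R)"
    by (simp only: mult_ac)
  then have "4 * X \<le> 3 * ?R"
    by (rule mult_left_le_imp_le) simp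
  then have "X \<le> 3/4 * ?R"
    by simp
  also have "\<dots> \<le> 3/4 * (2/3 * edge_energy N g + edge_energy N g)"
    using singletons_spread_le_edge_energy[OF N, of g] by (simp add: v_def)
  finally show ?thesis
    by (simp add: X_def)
qed

section \<open>A non-constant eigenvector\<close>

(* Antisymmetric under swapping 2j+1 and 2j+2, and nonzero only on sets containing exactly one
   element of each pair, so that the moves inside {1..2k} average out. *)
definition pair_alternant :: "nat \<Rightarrow> nat set \<Rightarrow> real" where
  "pair_alternant k S = (\<Prod>j<k. of_bool (2*j+1 \<in> S) - of_bool (2*j+2 \<in> S))"

lemma pair_alternant_Suc:
  "pair_alternant (Suc k) S = pair_alternant k S * (of_bool (2*k+1 \<in> S) - of_bool (2*k+2 \<in> S))"
  by (simp add: pair_alternant_def)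

lemma pair_alternant_cong:
  assumes "\<And>x. x \<in> {1..2*k} \<Longrightarrow> x \<in> S \<longleftrightarrow> x \<in> T"
  shows "pair_alternant k S = pair_alternant k T"
  unfolding pair_alternant_def using assms by (intro prod.cong refl) auto

lemma atLeastAtMost_Suc_double:
  "{1..2 * Suc k} = insert (2*k+2) (insert (2*k+1) {1..2*k})"
  by auto

lemma sum_insert_pair_alternant:
  "(\<Sum>x\<in>{1..2*k}. if x \<notin> S then pair_alternant k (insert x S) else 0) = 0"
proof (induction k)
  case (Suc k)
  let ?d = "of_bool (2*k+1 \<in> S) - of_bool (2*k+2 \<in> S) :: real"
  have "(\<Sum>x\<in>{1..2*k}. if x \<notin> S then pair_alternant (Suc k) (insert x S) else 0)
      = ?d * (\<Sum>x\<in>{1..2*k}. if x \<notin> S then pair_alternant k (insert x S) else 0)"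
    unfolding pair_alternant_Suc sum_distrib_left by (intro sum.cong refl) auto
  then have "(\<Sum>x\<in>{1..2*k}. if x \<notin> S then pair_alternant (Suc k) (insert x S) else 0) = 0"
    using Suc.IH by simp
  moreover have "pair_alternant k (insert x S) = pair_alternant k S" if "x > 2*k" for x
    using that by (intro pair_alternant_cong) auto
  ultimately show ?case
    unfolding atLeastAtMost_Suc_double by (simp add: pair_alternant_Suc)
qed simp

lemma sum_remove_pair_alternant:
  "(\<Sum>x\<in>{1..2*k}. if x \<in> S then pair_alternant k (S - {x}) else 0) = 0"
proof (induction k)
  case (Suc k)
  let ?d = "of_bool (2*k+1 \<in> S) - of_bool (2*k+2 \<in> S) :: real"
  have "(\<Sum>x\<in>{1..2*k}. if x \<in> S then pair_alternant (Suc k) (S - {x}) else 0)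
      = ?d * (\<Sum>x\<in>{1..2*k}. if x \<in> S then pair_alternant k (S - {x}) else 0)"
    unfolding pair_alternant_Suc sum_distrib_left by (intro sum.cong refl) auto
  then have "(\<Sum>x\<in>{1..2*k}. if x \<in> S then pair_alternant (Suc k) (S - {x}) else 0) = 0"
    using Suc.IH by simp
  moreover have "pair_alternant k (S - {x}) = pair_alternant k S" if "x > 2*k" for x
    using that by (intro pair_alternant_cong) auto
  ultimately show ?case
    unfolding atLeastAtMost_Suc_double by (simp add: pair_alternant_Suc)
qed simp

lemma card_pair_alternant_support:
  "pair_alternant k S \<noteq> 0 \<Longrightarrow> card (S \<inter> {1..2*k}) = k"
proof (induction k)
  case (Suc k)
  then have nonzero: "pair_alternant k S \<noteq> 0" "2*k+1 \<in> S \<longleftrightarrow> 2*k+2 \<notin> S"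
    by (auto simp: pair_alternant_Suc)
  have "S \<inter> {1..2 * Suc k} = (S \<inter> {2*k+1, 2*k+2}) \<union> (S \<inter> {1..2*k})"
    by auto
  then have "card (S \<inter> {1..2 * Suc k}) = card (S \<inter> {2*k+1, 2*k+2}) + card (S \<inter> {1..2*k})"
    by (simp only:) (rule card_Un_disjoint; auto)
  moreover have "card (S \<inter> {2*k+1, 2*k+2}) = 1"
    using nonzero(2) by (cases "2*k+1 \<in> S") (auto simp: Int_insert_right)
  ultimately show ?case
    using Suc.IH[OF nonzero(1)] by simp
qed simp

lemma sum_insert_pair_alternant_mult:
  assumes "2 * k \<le> N" and h: "\<And>x T. x \<in> {1..2*k} \<Longrightarrow> h (insert x T) = h T"
  shows "(\<Sum>x\<in>{1..N} - S. pair_alternant k (insert x S) * h (insert x S))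
       = pair_alternant k S * (\<Sum>x\<in>{2*k<..N} - S. h (insert x S))"
proof -
  have "(\<Sum>x\<in>{1..N} - S. pair_alternant k (insert x S) * h (insert x S))
      = (\<Sum>x\<in>({1..2*k} - S) \<union> ({2*k<..N} - S). pair_alternant k (insert x S) * h (insert x S))"
    using assms(1) by (intro sum.cong) auto
  also have "\<dots> = (\<Sum>x\<in>{1..2*k} - S. pair_alternant k (insert x S) * h (insert x S))
        + (\<Sum>x\<in>{2*k<..N} - S. pair_alternant k (insert x S) * h (insert x S))"
    by (rule sum.union_disjoint) auto
  also have "(\<Sum>x\<in>{1..2*k} - S. pair_alternant k (insert x S) * h (insert x S))
      = h S * (\<Sum>x\<in>{1..2*k}. if x \<notin> S then pair_alternant k (insert x S) else 0)"
    unfolding sum_distrib_left by (intro sum.mono_neutral_cong_left) (auto simp: h)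
  also have "(\<Sum>x\<in>{2*k<..N} - S. pair_alternant k (insert x S) * h (insert x S))
      = pair_alternant k S * (\<Sum>x\<in>{2*k<..N} - S. h (insert x S))"
    unfolding sum_distrib_left by (intro sum.cong refl) (auto intro: pair_alternant_cong)
  finally show ?thesis
    unfolding sum_insert_pair_alternant by simp
qed

lemma sum_remove_pair_alternant_mult:
  assumes "S \<subseteq> {1..N}" and h: "\<And>x T. x \<in> {1..2*k} \<Longrightarrow> h (T - {x}) = h T"
  shows "(\<Sum>x\<in>S. pair_alternant k (S - {x}) * h (S - {x}))
       = pair_alternant k S * (\<Sum>x\<in>S \<inter> {2*k<..N}. h (S - {x}))"
proof -
  have fin: "finite S"
    using assms(1) finite_subset by blast
  have "(\<Sum>x\<in>S. pair_alternant k (S - {x}) * h (S - {x}))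
      = (\<Sum>x\<in>(S \<inter> {1..2*k}) \<union> (S \<inter> {2*k<..N}). pair_alternant k (S - {x}) * h (S - {x}))"
    using assms(1) by (intro sum.cong) auto
  also have "\<dots> = (\<Sum>x\<in>S \<inter> {1..2*k}. pair_alternant k (S - {x}) * h (S - {x}))
        + (\<Sum>x\<in>S \<inter> {2*k<..N}. pair_alternant k (S - {x}) * h (S - {x}))"
    using fin by (intro sum.union_disjoint) auto
  also have "(\<Sum>x\<in>S \<inter> {1..2*k}. pair_alternant k (S - {x}) * h (S - {x}))
      = h S * (\<Sum>x\<in>{1..2*k}. if x \<in> S then pair_alternant k (S - {x}) else 0)"
    unfolding sum_distrib_left by (intro sum.mono_neutral_cong_left) (auto simp: h)
  also have "(\<Sum>x\<in>S \<inter> {2*k<..N}. pair_alternant k (S - {x}) * h (S - {x}))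
      = pair_alternant k S * (\<Sum>x\<in>S \<inter> {2*k<..N}. h (S - {x}))"
    unfolding sum_distrib_left by (intro sum.cong refl) (auto intro: pair_alternant_cong)
  finally show ?thesis
    unfolding sum_remove_pair_alternant by simp
qed

lemma Qop_pair_alternant_mult:
  assumes N: "N \<ge> 2" "2 * k \<le> N" and S: "S \<in> Omega N"
    and h: "\<And>x T. x \<in> {1..2*k} \<Longrightarrow> h (insert x T) = h T"
      "\<And>x T. x \<in> {1..2*k} \<Longrightarrow> h (T - {x}) = h T"
  shows "Qop N (\<lambda>T. pair_alternant k T * h T) S = pair_alternant k S * (h S
    + (4/3 * real (card S) * ((\<Sum>x\<in>{2*k<..N} - S. h (insert x S)) - (real N - real (card S)) * h S)
       + 4/9 * (real (card S) - 1) * ((\<Sum>x\<in>S \<inter> {2*k<..N}. h (S - {x})) - real (card S) * h S))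
      / (real N * (real N - 1)))"
proof -
  have "S \<subseteq> {1..N}" "finite S"
    using S finite_Omega_member by (auto simp: Omega_iff)
  then have card_compl: "real (card ({1..N} - S)) = real N - real (card S)"
    using card_mono[OF finite_atLeastAtMost \<open>S \<subseteq> {1..N}\<close>] by (simp add: card_Diff_subset of_nat_diff)
  let ?g = "\<lambda>T. pair_alternant k T * h T"
  have up: "(\<Sum>x\<in>{1..N} - S. ?g (insert x S) - ?g S)
      = pair_alternant k S * ((\<Sum>x\<in>{2*k<..N} - S. h (insert x S)) - (real N - real (card S)) * h S)"
    by (simp only: sum_subtractf sum_constant card_compl sum_insert_pair_alternant_mult[OF N(2) h(1)])
       (simp add: algebra_simps)
  have down: "(\<Sum>x\<in>S. ?g (S - {x}) - ?g S)
      = pair_alternant k S * ((\<Sum>x\<in>S \<inter> {2*k<..N}. h (S - {x})) - real (card S) * h S)"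
    by (simp only: sum_subtractf sum_constant sum_remove_pair_alternant_mult[OF \<open>S \<subseteq> {1..N}\<close> h(2)])
       (simp add: algebra_simps)
  have "real N * (real N - 1) \<noteq> 0"
    using N by simp
  then show ?thesis
    unfolding Qop_generator[OF N(1) S] up down by (simp add: field_simps)
qed

lemma Qop_pair_alternant_even:
  assumes "k \<ge> 1" and S: "S \<in> Omega (2*k)"
  shows "Qop (2*k) (pair_alternant k) S
       = (1 - 4 * real k * (4 * real k - 1) / (9 * (real (2*k) * (real (2*k) - 1)))) * pair_alternant k S"
proof (cases "pair_alternant k S = 0")
  case False
  have "S \<inter> {1..2*k} = S"
    using S by (auto simp: Omega_iff)
  then have "card S = k"
    using card_pair_alternant_support[OF False] by simp
  then show ?thesis
    using Qop_pair_alternant_mult[of "2*k" k S "\<lambda>_. 1"] assms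
    by (simp add: field_simps)
qed (use Qop_pair_alternant_mult[of "2*k" k S "\<lambda>_. 1"] assms in simp)

lemma Qop_pair_alternant_odd:
  assumes "k \<ge> 1" and S: "S \<in> Omega (2*k+1)"
  defines "f \<equiv> \<lambda>T. pair_alternant k T * (if 2*k+1 \<in> T then 1 else 3)"
  shows "Qop (2*k+1) f S
       = (1 - 4 * real k * (4 * real k + 1) / (9 * (real (2*k+1) * (real (2*k+1) - 1)))) * f S"
proof -
  let ?h = "\<lambda>T. if 2*k+1 \<in> T then 1 else 3 :: real"
  have "{2*k<..2*k+1} = {2*k+1}"
    by auto
  then have Q: "Qop (2*k+1) f S = pair_alternant k S * (?h S
    + (4/3 * real (card S) * ((\<Sum>x\<in>{2*k+1} - S. ?h (insert x S)) - (real (2*k+1) - real (card S)) * ?h S)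
       + 4/9 * (real (card S) - 1) * ((\<Sum>x\<in>S \<inter> {2*k+1}. ?h (S - {x})) - real (card S) * ?h S))
      / (real (2*k+1) * (real (2*k+1) - 1)))"
    using Qop_pair_alternant_mult[of "2*k+1" k S ?h] assms by (simp add: f_def)
  show ?thesis
  proof (cases "pair_alternant k S = 0")
    case False
    have "S = (S \<inter> {1..2*k}) \<union> (S \<inter> {2*k+1})"
      using S by (auto simp: Omega_iff)
    then have "card S = card ((S \<inter> {1..2*k}) \<union> (S \<inter> {2*k+1}))"
      by (rule arg_cong)
    also have "\<dots> = card (S \<inter> {1..2*k}) + card (S \<inter> {2*k+1})"
      by (rule card_Un_disjoint) auto
    finally have "card S = k + of_bool (2*k+1 \<in> S)"
      using card_pair_alternant_support[OF False] by (simp add: Int_insert_right)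
    moreover have "real (2*k+1) * (real (2*k+1) - 1) > 0"
      using \<open>k \<ge> 1\<close> by simp
    moreover have "{2*k+1} - S = {}" "S \<inter> {2*k+1} = {2*k+1}" "2*k+1 \<notin> S - {2*k+1}"
      if "2*k+1 \<in> S"
      using that by auto
    moreover have "{2*k+1} - S = {2*k+1}" "S \<inter> {2*k+1} = {}" if "2*k+1 \<notin> S"
      using that by auto
    ultimately show ?thesis
      unfolding Q by (cases "2*k+1 \<in> S") (simp_all add: f_def field_simps)
  qed (use Q in \<open>simp add: f_def\<close>)
qed

lemma exists_nonconstant_eigenpair:
  assumes N: "N \<ge> 2"
  shows "\<exists>lam f. is_eigenpair N lam f \<and> \<not> (\<exists>c. \<forall>S\<in>Omega N. f S = c)"
proof -
  define k where "k = N div 2"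
  define S1 where "S1 = {x \<in> {1..2*k}. odd x}"
  have "k \<ge> 1"
    using N by (simp add: k_def)
  have S1: "S1 \<in> Omega N" "pair_alternant k S1 = 1"
    using \<open>k \<ge> 1\<close> by (auto simp: S1_def k_def Omega_iff pair_alternant_def intro!: prod.neutral exI[of _ 1])
  have S2: "{1, 2} \<in> Omega N" "pair_alternant k {1, 2} = 0"
    using N \<open>k \<ge> 1\<close> by (auto simp: Omega_iff pair_alternant_def intro!: prod_zero bexI[of _ 0])
  have nonconst: "\<not> (\<exists>c. \<forall>S\<in>Omega N. f S = c)" if "f S1 \<noteq> 0" "f {1, 2} = 0" for f :: "nat set \<Rightarrow> real"
    using that S1(1) S2(1) by metis
  show ?thesis
  proof (cases "even N")
    case True
    then have "N = 2*k"
      by (simp add: k_def)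
    then have "is_eigenpair N (1 - 4 * real k * (4 * real k - 1) / (9 * (real N * (real N - 1)))) (pair_alternant k)"
      using Qop_pair_alternant_even[OF \<open>k \<ge> 1\<close>] S1 by (auto simp: is_eigenpair_iff intro!: bexI[of _ S1])
    then show ?thesis
      using nonconst[of "pair_alternant k"] S1 S2 by auto
  next
    case False
    then have "N = 2*k+1"
      by (simp add: k_def)
    define f where "f T = pair_alternant k T * (if 2*k+1 \<in> T then 1 else 3)" for T
    have "f S1 \<noteq> 0"
      using S1 by (simp add: f_def S1_def)
    then have "is_eigenpair N (1 - 4 * real k * (4 * real k + 1) / (9 * (real N * (real N - 1)))) f"
      using Qop_pair_alternant_odd[OF \<open>k \<ge> 1\<close>] S1 \<open>N = 2*k+1\<close>
      by (auto simp: is_eigenpair_iff f_def[abs_def] intro!: bexI[of _ S1])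
    moreover have "f {1, 2} = 0"
      using S2 by (simp add: f_def)
    ultimately show ?thesis
      using nonconst[of f] \<open>f S1 \<noteq> 0\<close> by blast
  qed
qed

section \<open>The spectral gap\<close>

lemma eigenvalue_bound_centered:
  assumes N: "N \<ge> 2" and eig: "\<forall>S\<in>Omega N. Qop N g S = lam * g S"
    and mean: "(\<Sum>S\<in>Omega N. 3 ^ card S * g S) = 0"
    and S0: "S0 \<in> Omega N" "g S0 \<noteq> 0"
  shows "lam \<le> 1 - 16 / (15 * (real N * (real N - 1)))"
proof -
  define D where "D = real N * (real N - 1)"
  define X where "X = (\<Sum>S\<in>Omega N. 3 ^ card S * (g S)^2)"
  have "D > 0"
    using N by (simp add: D_def)
  have "X > 0"
    unfolding X_def using S0 by (intro sum_pos2[OF finite_Omega S0(1)]) auto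
  have "16/15 * X \<le> 4/3 * edge_energy N g"
    using poincare_Omega[OF N mean] by (simp add: X_def)
  also have "\<dots> \<le> 4/3 * (\<Sum>S\<in>Omega N. \<Sum>x\<in>{1..N} - S.
                  real (card S) * 3 ^ card S * (g (insert x S) - g S)^2)"
    unfolding edge_energy_def
  proof (intro mult_left_mono sum_mono)
    fix S x
    assume "S \<in> Omega N"
    then have "real (card S) \<ge> 1"
      using finite_Omega_member[of S N] by (simp add: Omega_iff Suc_le_eq card_gt_0_iff)
    then show "3 ^ card S * (g (insert x S) - g S)^2
        \<le> real (card S) * 3 ^ card S * (g (insert x S) - g S)^2"
      using mult_right_mono[of 1 "real (card S)" "3 ^ card S * (g (insert x S) - g S)^2"] by simp
  qed simp
  also have "\<dots> = D * (\<Sum>S\<in>Omega N. 3 ^ card S * g S * (g S - Qop N g S))"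
    unfolding D_def by (rule dirichlet_form[OF N, symmetric])
  also have "\<dots> = D * (1 - lam) * X"
    unfolding X_def using eig by (simp add: sum_distrib_left power2_eq_square algebra_simps)
  finally have "D * (1 - lam) * X \<ge> 16/15 * X" .
  then have "D * (1 - lam) \<ge> 16/15"
    using \<open>X > 0\<close> by (simp only: mult_le_cancel_right_pos)
  then have "16 \<le> (1 - lam) * (15 * D)"
    by (simp add: algebra_simps)
  then have "16 / (15 * D) \<le> 1 - lam"
    using \<open>D > 0\<close> by (simp add: pos_divide_le_eq)
  then show ?thesis
    by (simp add: D_def)
qed

lemma eigenvalue_bound:
  assumes N: "N \<ge> 2" and eig: "\<forall>S\<in>Omega N. Qop N f S = lam * f S"
    and nonconst: "\<not> (\<exists>c. \<forall>S\<in>Omega N. f S = c)"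
  shows "lam \<le> 1 - 16 / (15 * (real N * (real N - 1)))"
proof -
  \<comment> \<open>Subtracting the weighted mean keeps an eigenvector: either lam = 1 or the mean is 0.\<close>
  define Z where "Z = (4::real) ^ N - 1"
  define m where "m = (\<Sum>S\<in>Omega N. 3 ^ card S * f S) / Z"
  have "Z > 0"
    using N by (simp add: Z_def one_less_power)
  have "lam * (\<Sum>S\<in>Omega N. 3 ^ card S * f S) = (\<Sum>S\<in>Omega N. 3 ^ card S * Qop N f S)"
    using eig by (simp add: sum_distrib_left mult_ac)
  also have "\<dots> = (\<Sum>S\<in>Omega N. 3 ^ card S * f S)"
    by (rule sum_weight_Qop[OF N])
  finally have "lam * m = m"
    by (cases "lam = 1") (simp_all add: m_def)
  define g where "g S = f S - m" for S
  have "Qop N g S = lam * g S" if S: "S \<in> Omega N" for S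
  proof -
    have "Qop N g S = Qop N f S - Qop N (\<lambda>_. m) S"
      by (simp add: g_def Qop_def algebra_simps sum_subtractf)
    also have "\<dots> = lam * g S"
      using eig S Qop_const[OF N S] \<open>lam * m = m\<close> by (simp add: g_def algebra_simps)
    finally show ?thesis .
  qed
  moreover have "(\<Sum>S\<in>Omega N. 3 ^ card S * g S) = 0"
  proof -
    have "(\<Sum>S\<in>Omega N. 3 ^ card S * g S)
        = (\<Sum>S\<in>Omega N. 3 ^ card S * f S) - m * (\<Sum>S\<in>Omega N. 3 ^ card S)"
      by (simp add: g_def algebra_simps sum_subtractf sum_distrib_left)
    then show ?thesis
      using \<open>Z > 0\<close> by (simp add: sum_weights_Omega m_def Z_def)
  qed
  moreover obtain S0 where "S0 \<in> Omega N" "g S0 \<noteq> 0"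
    using nonconst by (auto simp: g_def)
  ultimately show ?thesis
    by (intro eigenvalue_bound_centered[OF N]) auto
qed

lemma eigenvectors_orthogonal:
  assumes "is_eigenpair N lam1 f1" "is_eigenpair N lam2 f2" "lam1 \<noteq> lam2"
  shows "(\<Sum>S\<in>Omega N. 3 ^ card S * f1 S * f2 S) = 0"
proof -
  have "lam2 * (\<Sum>S\<in>Omega N. 3 ^ card S * f1 S * f2 S) = (\<Sum>S\<in>Omega N. 3 ^ card S * f1 S * Qop N f2 S)"
    using assms(2) by (simp add: is_eigenpair_iff sum_distrib_left mult_ac)
  also have "\<dots> = (\<Sum>S\<in>Omega N. 3 ^ card S * Qop N f1 S * f2 S)"
    by (rule Qop_self_adjoint)
  also have "\<dots> = lam1 * (\<Sum>S\<in>Omega N. 3 ^ card S * f1 S * f2 S)"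
    using assms(1) by (simp add: is_eigenpair_iff sum_distrib_left mult_ac)
  finally show ?thesis
    using assms(3) by simp
qed

(* Bessel's inequality for the point mass at y. *)
lemma bessel_point_mass:
  fixes e :: "'i \<Rightarrow> 'a \<Rightarrow> real" and w :: "'a \<Rightarrow> real"
  assumes fin: "finite A" "finite L" and y: "y \<in> A"
    and w: "\<And>x. x \<in> A \<Longrightarrow> w x > 0"
    and norm_pos: "\<And>l. l \<in> L \<Longrightarrow> (\<Sum>x\<in>A. w x * (e l x)^2) > 0"
    and orth: "\<And>l l'. l \<in> L \<Longrightarrow> l' \<in> L \<Longrightarrow> l \<noteq> l' \<Longrightarrow> (\<Sum>x\<in>A. w x * e l x * e l' x) = 0"
  shows "(\<Sum>l\<in>L. (e l y)^2 / (\<Sum>x\<in>A. w x * (e l x)^2)) \<le> 1 / w y"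
proof -
  define n where "n l = (\<Sum>x\<in>A. w x * (e l x)^2)" for l
  define c where "c l = e l y / n l" for l
  define s where "s x = (\<Sum>l\<in>L. c l * e l x)" for x
  have s_e: "(\<Sum>x\<in>A. w x * s x * e l x) = c l * n l" if "l \<in> L" for l
  proof -
    have "(\<Sum>x\<in>A. w x * s x * e l x) = (\<Sum>l'\<in>L. c l' * (\<Sum>x\<in>A. w x * e l' x * e l x))"
      unfolding s_def by (simp add: sum_distrib_left sum_distrib_right mult_ac sum.swap[of _ A])
    also have "\<dots> = c l * (\<Sum>x\<in>A. w x * e l x * e l x)"
      using that fin(2) orth by (subst sum.remove[of L l]) (auto intro!: sum.neutral)
    finally show ?thesis
      by (simp add: n_def power2_eq_square mult_ac)
  qed
  have s_y: "s y = (\<Sum>l\<in>L. (e l y)^2 / n l)"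
    by (simp add: s_def c_def power2_eq_square)
  have "(\<Sum>x\<in>A. w x * (s x)^2) = (\<Sum>l\<in>L. c l * (\<Sum>x\<in>A. w x * s x * e l x))"
    by (simp add: power2_eq_square s_def sum_distrib_left sum_distrib_right mult_ac sum.swap[of _ A])
  also have "\<dots> = (\<Sum>l\<in>L. (e l y)^2 / n l)"
    using norm_pos by (intro sum.cong refl) (simp add: s_e c_def n_def power2_eq_square)
  finally have s_norm: "(\<Sum>x\<in>A. w x * (s x)^2) = (\<Sum>l\<in>L. (e l y)^2 / n l)" .
  have "w y > 0"
    using w y by blast
  have "0 \<le> (\<Sum>x\<in>A. w x * (of_bool (x = y) / w y - s x)^2)"
    using w by (intro sum_nonneg) (simp add: less_imp_le)
  also have "\<dots> = (\<Sum>x\<in>A. (if x = y then 1 / w y - 2 * s y else 0) + w x * (s x)^2)"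
    using \<open>w y > 0\<close> by (intro sum.cong refl) (simp add: power2_diff power2_eq_square field_simps)
  also have "\<dots> = 1 / w y - (\<Sum>l\<in>L. (e l y)^2 / n l)"
    using y fin(1) s_y s_norm by (simp add: sum.distrib)
  finally show ?thesis
    by (simp add: n_def)
qed

lemma card_orthogonal_family_le:
  fixes e :: "'i \<Rightarrow> 'a \<Rightarrow> real" and w :: "'a \<Rightarrow> real"
  assumes fin: "finite A" "finite L"
    and w: "\<And>x. x \<in> A \<Longrightarrow> w x > 0"
    and nonzero: "\<And>l. l \<in> L \<Longrightarrow> \<exists>x\<in>A. e l x \<noteq> 0"
    and orth: "\<And>l l'. l \<in> L \<Longrightarrow> l' \<in> L \<Longrightarrow> l \<noteq> l' \<Longrightarrow> (\<Sum>x\<in>A. w x * e l x * e l' x) = 0"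
  shows "card L \<le> card A"
proof -
  have w_nonneg: "w x \<ge> 0" if "x \<in> A" for x
    using w[OF that] by simp
  define n where "n l = (\<Sum>x\<in>A. w x * (e l x)^2)" for l
  have n_pos: "n l > 0" if l: "l \<in> L" for l
  proof -
    obtain x where "x \<in> A" "e l x \<noteq> 0"
      using nonzero[OF l] by blast
    then show ?thesis
      unfolding n_def using w by (intro sum_pos2[OF fin(1)]) (auto intro!: mult_nonneg_nonneg w_nonneg)
  qed
  have "real (card L) = (\<Sum>l\<in>L. (\<Sum>y\<in>A. w y * (e l y)^2) / n l)"
    using n_pos by (simp add: n_def less_imp_neq[symmetric] cong: sum.cong)
  also have "\<dots> = (\<Sum>y\<in>A. w y * (\<Sum>l\<in>L. (e l y)^2 / n l))"
    by (simp add: sum_divide_distrib sum_distrib_left sum.swap[of _ A] mult_ac)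
  also have "\<dots> \<le> (\<Sum>y\<in>A. w y * (1 / w y))"
    using bessel_point_mass[OF fin _ w _ orth] n_pos w
    by (intro sum_mono mult_left_mono) (auto simp: n_def w_nonneg)
  also have "\<dots> = real (card A)"
    using w by (simp add: less_imp_neq[symmetric] cong: sum.cong)
  finally show ?thesis
    by simp
qed

lemma finite_eigenvalues: "finite {lam. \<exists>f. is_eigenpair N lam f}"
proof -
  let ?E = "{lam. \<exists>f. is_eigenpair N lam f}"
  define F where "F lam = (SOME f. is_eigenpair N lam f)" for lam
  have F: "is_eigenpair N lam (F lam)" if lam: "lam \<in> ?E" for lam
  proof -
    obtain f where "is_eigenpair N lam f"
      using lam by blast
    then show ?thesis
      unfolding F_def by (rule someI[where P = "is_eigenpair N lam"])
  qed
  have "card L \<le> card (Omega N)" if "L \<subseteq> ?E" "finite L" for L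
  proof (rule card_orthogonal_family_le[OF finite_Omega \<open>finite L\<close>])
    show "\<exists>S\<in>Omega N. F lam S \<noteq> 0" if "lam \<in> L" for lam
      using F[of lam] that \<open>L \<subseteq> ?E\<close> by (auto simp: is_eigenpair_def)
    show "(\<Sum>S\<in>Omega N. 3 ^ card S * F lam S * F lam' S) = 0"
      if "lam \<in> L" "lam' \<in> L" "lam \<noteq> lam'" for lam lam'
      using that \<open>L \<subseteq> ?E\<close> by (auto intro!: eigenvectors_orthogonal F)
  qed simp
  then show ?thesis
    using finite_if_finite_subsets_card_bdd[of ?E] by blast
qed

lemma spectral_gap_ge:
  assumes N: "N \<ge> 2"
  shows "spectral_gap N \<ge> 16 / (15 * (real N * (real N - 1)))"
proof -
  let ?E = "{lam. \<exists>f. is_eigenpair N lam f \<and> \<not> (\<exists>c. \<forall>S\<in>Omega N. f S = c)}"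
  have "finite ?E"
    by (rule finite_subset[OF _ finite_eigenvalues]) auto
  moreover have "?E \<noteq> {}"
    using exists_nonconstant_eigenpair[OF N] by auto
  moreover have "\<forall>lam\<in>?E. lam \<le> 1 - 16 / (15 * (real N * (real N - 1)))"
    using eigenvalue_bound[OF N] by (auto simp: is_eigenpair_iff)
  ultimately have "second_eigenvalue N \<le> 1 - 16 / (15 * (real N * (real N - 1)))"
    by (simp add: second_eigenvalue_def)
  then show ?thesis
    by (simp add: spectral_gap_def)
qed

theorem mainTheorem5:
  fixes N :: nat
  assumes "N \<ge> 2"
  shows "is_markov_on_Omega N \<and> reversible_wrt N (Mdist N) \<and> ergodic_on_Omega N
         \<and> stationary_distribution N (Mdist N)
         \<and> spectral_gap N \<ge> 4 / (9 * real N * (real N - 1))"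
proof -
  have "real N * (real N - 1) > 0"
    using assms by simp
  then have "(4/9) / (real N * (real N - 1)) \<le> (16/15) / (real N * (real N - 1))"
    by (intro divide_right_mono) auto
  then have "4 / (9 * real N * (real N - 1)) \<le> 16 / (15 * (real N * (real N - 1)))"
    by (simp add: mult.assoc)
  then show ?thesis
    using markov_Omega[OF assms] reversible_Mdist ergodic_Omega[OF assms] stationary_Mdist[OF assms]
      spectral_gap_ge[OF assms] by (blast intro: order_trans)
qed

end
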